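(* Let $2\le t\le n$. Then for all $s\ge1$, $\mathrm{Ass}(S/I_t(L_n)^s)=\{\mathfrak p_F: F\in C_{n,t}\}$.
   Context: $K$ is a field, $S=K[x_1,\ldots,x_n]$, $I_t(L_n)=(u_1,\ldots,u_{n-t+1})$ with $u_i=x_ix_{i+1}\cdots x_{i+t-1}$, and $\mathfrak p_F=(x_i:i\in F)$. $C_{n,t}$ is the set of subsets $\{i_1<\cdots<i_r\}\subseteq[n]$ with: (1) $1\le i_1\le t$; (2) $i_2>t$; (3) $1\le i_{j+1}-i_j\le t$ for $1\le j\le r-1$; (4) $i_{j+2}-i_j>t$ for $1\le j\le r-2$; (5) $i_{r-1}<n-t+1$; (6) $n-t+1\le i_r\le n$ (conditions referring to nonexistent indices are vacuous). *)

theory Defs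
  imports "HOL-Library.Poly_Mapping"
begin

text \<open>Polynomials over a field K in variables indexed by nat; a monomial is
 an exponent vector (finitely supported nat-to-nat map).\<close>
type_synonym 'a mpoly = "(nat \<Rightarrow>\<^sub>0 nat) \<Rightarrow>\<^sub>0 'a"

text \<open>S = K[x_1,...,x_n]: polynomials only involving variables x_1..x_n.\<close>
definition polyS :: "nat \<Rightarrow> 'a::field mpoly set" where
  "polyS n = {p. \<forall>m \<in> Poly_Mapping.keys p. Poly_Mapping.keys m \<subseteq> {1..n}}"

definition var :: "nat \<Rightarrow> 'a::field mpoly" where
  "var i = Poly_Mapping.single (Poly_Mapping.single i 1) 1"

definition gen_ideal :: "nat \<Rightarrow> 'a::field mpoly set \<Rightarrow> 'a mpoly set" where
  "gen_ideal n G = {p. \<exists>A c. finite A \<and> A \<subseteq> G \<and> (\<forall>g\<in>A. c g \<in> polyS n)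
                          \<and> p = (\<Sum>g\<in>A. c g * g)}"

definition ideal_prod :: "nat \<Rightarrow> 'a::field mpoly set \<Rightarrow> 'a mpoly set \<Rightarrow> 'a mpoly set" where
  "ideal_prod n I J = gen_ideal n {a * b | a b. a \<in> I \<and> b \<in> J}"

fun ideal_pow :: "nat \<Rightarrow> 'a::field mpoly set \<Rightarrow> nat \<Rightarrow> 'a mpoly set" where
  "ideal_pow n I 0 = polyS n"
| "ideal_pow n I (Suc s) = ideal_prod n (ideal_pow n I s) I"

definition is_ideal :: "nat \<Rightarrow> 'a::field mpoly set \<Rightarrow> bool" where
  "is_ideal n P \<longleftrightarrow> P \<subseteq> polyS n \<and> 0 \<in> P \<and> (\<forall>a\<in>P. \<forall>b\<in>P. a + b \<in> P)
     \<and> (\<forall>a\<in>P. \<forall>r\<in>polyS n. r * a \<in> P)"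

definition prime_ideal :: "nat \<Rightarrow> 'a::field mpoly set \<Rightarrow> bool" where
  "prime_ideal n P \<longleftrightarrow> is_ideal n P \<and> P \<noteq> polyS n
     \<and> (\<forall>a\<in>polyS n. \<forall>b\<in>polyS n. a * b \<in> P \<longrightarrow> a \<in> P \<or> b \<in> P)"

text \<open>Associated primes of the S-module S/I: primes of the form (I : f), f \<in> S.\<close>
definition Ass :: "nat \<Rightarrow> 'a::field mpoly set \<Rightarrow> 'a mpoly set set" where
  "Ass n I = {P. prime_ideal n P \<and> (\<exists>f\<in>polyS n. P = {g \<in> polyS n. g * f \<in> I})}"

definition path_mon :: "nat \<Rightarrow> nat \<Rightarrow> 'a::field mpoly" where
  "path_mon t i = (\<Prod>j\<in>{i..i+t-1}. var j)"

definition path_ideal :: "nat \<Rightarrow> nat \<Rightarrow> 'a::field mpoly set" where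
  "path_ideal n t = gen_ideal n {path_mon t i | i. 1 \<le> i \<and> i \<le> n - t + 1}"

definition prime_of :: "nat \<Rightarrow> nat set \<Rightarrow> 'a::field mpoly set" where
  "prime_of n F = gen_ideal n (var ` F)"

text \<open>C_{n,t}; with l the increasing enumeration of F, l!j = i_{j+1}.\<close>
definition C_set :: "nat \<Rightarrow> nat \<Rightarrow> nat set set" where
  "C_set n t = {F. F \<subseteq> {1..n} \<and> F \<noteq> {} \<and>
     (let l = sorted_list_of_set F; r = length l in
        1 \<le> l!0 \<and> l!0 \<le> t
      \<and> (2 \<le> r \<longrightarrow> l!1 > t)
      \<and> (\<forall>j. j + 1 < r \<longrightarrow> 1 \<le> l!(j+1) - l!j \<and> l!(j+1) - l!j \<le> t)
      \<and> (\<forall>j. j + 2 < r \<longrightarrow> l!(j+2) - l!j > t)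
      \<and> (2 \<le> r \<longrightarrow> l!(r-2) < n - t + 1)
      \<and> n - t + 1 \<le> l!(r-1) \<and> l!(r-1) \<le> n)}"

end

theory Submission
  imports Defs "HOL-Library.Set_Algebras"
begin

(* I = I_t(L_n) is generated by the monomials u_w of the windows {w..w+t-1}, so I^s is the monomial
   ideal spanned by the monomials x^m dominating a sum of s window vectors. A shortest-path recursion along
   the path peels such a sum off m in layers as soon as every minimal vertex cover F of the windows has
   F-degree at least s in m; the minimal vertex covers are exactly the sets of C_{n,t}. Hence I^s is the
   intersection of the p_F-primary ideals p_F^s, F in C_{n,t}, which confines Ass(S/I^s) to these p_F.
   Conversely, for i in F the colon ideal (I^s : x_i^(s-1) prod_{j not in F} x_j^s) is p_F: private windows
   of the elements of F (windows meeting F in a single point) supply the s generators. *)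

section \<open>Ideals of \<open>S\<close>\<close>

lemma polyS_zero [simp]: "0 \<in> polyS n"
  by (simp add: polyS_def)

lemma polyS_one [simp]: "1 \<in> polyS n"
  by (simp add: polyS_def)

lemma polyS_single: "Poly_Mapping.keys m \<subseteq> {1..n} \<Longrightarrow> Poly_Mapping.single m c \<in> polyS n"
  by (simp add: polyS_def)

lemma var_in_polyS: "i \<in> {1..n} \<Longrightarrow> var i \<in> polyS n"
  unfolding var_def by (rule polyS_single) simp

lemma keys_add_nat: "Poly_Mapping.keys (a + b :: 'b \<Rightarrow>\<^sub>0 nat) = Poly_Mapping.keys a \<union> Poly_Mapping.keys b"
  by (rule set_eqI) (simp add: in_keys_iff lookup_add)

lemma polyS_add: "p \<in> polyS n \<Longrightarrow> q \<in> polyS n \<Longrightarrow> p + q \<in> polyS n"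
  unfolding polyS_def using keys_add[of p q] by blast

lemma polyS_mult:
  assumes "p \<in> polyS n" and "q \<in> polyS n"
  shows "p * q \<in> polyS n"
  unfolding polyS_def
proof (intro CollectI ballI)
  fix m assume "m \<in> Poly_Mapping.keys (p * q)"
  then obtain a b where "m = a + b" "a \<in> Poly_Mapping.keys p" "b \<in> Poly_Mapping.keys q"
    using keys_mult by blast
  with assms show "Poly_Mapping.keys m \<subseteq> {1..n}"
    by (auto simp: polyS_def keys_add_nat)
qed

lemma polyS_sum: "(\<And>x. x \<in> A \<Longrightarrow> f x \<in> polyS n) \<Longrightarrow> sum f A \<in> polyS n"
  by (induction A rule: infinite_finite_induct) (auto intro: polyS_add)

lemma polyS_prod: "(\<And>x. x \<in> A \<Longrightarrow> f x \<in> polyS n) \<Longrightarrow> prod f A \<in> polyS n"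
  by (induction A rule: infinite_finite_induct) (auto intro: polyS_mult)

lemma polyS_power: "p \<in> polyS n \<Longrightarrow> p ^ s \<in> polyS n"
  by (induction s) (auto intro: polyS_mult)

lemma ideal_sum_mem:
  assumes "is_ideal n J" and "\<And>x. x \<in> A \<Longrightarrow> f x \<in> J"
  shows "sum f A \<in> J"
  using assms(2) by (induction A rule: infinite_finite_induct) (use assms(1) in \<open>auto simp: is_ideal_def\<close>)

lemma ideal_mult_left: "is_ideal n J \<Longrightarrow> a \<in> J \<Longrightarrow> r \<in> polyS n \<Longrightarrow> r * a \<in> J"
  by (auto simp: is_ideal_def)

lemma ideal_mult_right: "is_ideal n J \<Longrightarrow> a \<in> J \<Longrightarrow> r \<in> polyS n \<Longrightarrow> a * r \<in> J"
  by (auto simp: is_ideal_def mult.commute)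

lemma gen_ideal_least: "is_ideal n J \<Longrightarrow> X \<subseteq> J \<Longrightarrow> gen_ideal n X \<subseteq> J"
  by (auto simp: gen_ideal_def intro!: ideal_sum_mem ideal_mult_left)

lemma gen_ideal_mono: "X \<subseteq> Y \<Longrightarrow> gen_ideal n X \<subseteq> gen_ideal n Y"
  unfolding gen_ideal_def by blast

lemma prime_ideal_one_notin: "prime_ideal n P \<Longrightarrow> 1 \<notin> P"
  by (metis mult.right_neutral prime_ideal_def is_ideal_def subsetI subset_antisym)

lemma prime_ideal_prod_mem:
  assumes P: "prime_ideal n P" and "\<And>k. k \<in> K \<Longrightarrow> q k \<in> polyS n"
    and "finite K" and "prod q K \<in> P"
  shows "\<exists>k\<in>K. q k \<in> P"
  using assms(3,2,4)
proof (induction K rule: finite_induct)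
  case empty
  then show ?case using prime_ideal_one_notin[OF P] by simp
next
  case (insert x K)
  have "q x \<in> polyS n" "prod q K \<in> polyS n"
    using insert.prems(1) by (auto intro: polyS_prod)
  then have "q x \<in> P \<or> prod q K \<in> P"
    using P insert.prems(2) insert.hyps by (simp add: prime_ideal_def)
  then show ?case using insert by blast
qed

lemma prime_ideal_power_mem:
  assumes "prime_ideal n P" and "q \<in> polyS n" and "q ^ s \<in> P"
  shows "q \<in> P"
  using prime_ideal_prod_mem[OF assms(1), of "{..<s}" "\<lambda>_. q"] assms(2,3) by auto

lemma gen_ideal_subset_polyS: "G \<subseteq> polyS n \<Longrightarrow> gen_ideal n G \<subseteq> polyS n"
  by (auto simp: gen_ideal_def intro!: polyS_sum polyS_mult)

lemma gen_ideal_mult_generator: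
  assumes "r \<in> polyS n" and "g \<in> G"
  shows "r * g \<in> gen_ideal n G"
  unfolding gen_ideal_def using assms by (intro CollectI exI[of _ "{g}"] exI[of _ "\<lambda>_. r"]) auto

lemma is_ideal_gen_ideal:
  assumes G: "G \<subseteq> polyS n"
  shows "is_ideal n (gen_ideal n G)"
  unfolding is_ideal_def
proof (intro conjI ballI)
  show "gen_ideal n G \<subseteq> polyS n" using G by (rule gen_ideal_subset_polyS)
  show "0 \<in> gen_ideal n G"
    unfolding gen_ideal_def by (intro CollectI exI[of _ "{}"]) simp
next
  fix a b :: "'a::field mpoly" assume "a \<in> gen_ideal n G" "b \<in> gen_ideal n G"
  then obtain A c B d where A: "finite A" "A \<subseteq> G" "\<forall>g\<in>A. c g \<in> polyS n" "a = (\<Sum>g\<in>A. c g * g)"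
    and B: "finite B" "B \<subseteq> G" "\<forall>g\<in>B. d g \<in> polyS n" "b = (\<Sum>g\<in>B. d g * g)"
    unfolding gen_ideal_def by blast
  define e where "e g = (if g \<in> A then c g else 0) + (if g \<in> B then d g else 0)" for g
  have "(\<Sum>g\<in>A \<union> B. e g * g)
      = (\<Sum>g\<in>A \<union> B. (if g \<in> A then c g else 0) * g) + (\<Sum>g\<in>A \<union> B. (if g \<in> B then d g else 0) * g)"
    unfolding e_def by (simp add: distrib_right sum.distrib)
  also have "\<dots> = a + b"
  proof -
    have "(\<Sum>g\<in>A \<union> B. (if g \<in> A then c g else 0) * g) = a"
      unfolding A(4) by (rule sum.mono_neutral_cong_right) (use A B in auto)
    moreover have "(\<Sum>g\<in>A \<union> B. (if g \<in> B then d g else 0) * g) = b"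
      unfolding B(4) by (rule sum.mono_neutral_cong_right) (use A B in auto)
    ultimately show ?thesis by simp
  qed
  finally show "a + b \<in> gen_ideal n G"
    unfolding gen_ideal_def using A B by (intro CollectI exI[of _ "A \<union> B"] exI[of _ e]) (auto simp: e_def intro: polyS_add)
next
  fix a r :: "'a::field mpoly" assume "a \<in> gen_ideal n G" "r \<in> polyS n"
  then obtain A c where A: "finite A" "A \<subseteq> G" "\<forall>g\<in>A. c g \<in> polyS n" "a = (\<Sum>g\<in>A. c g * g)"
    unfolding gen_ideal_def by blast
  have "r * a = (\<Sum>g\<in>A. (r * c g) * g)"
    using A(4) by (simp add: sum_distrib_left mult.assoc)
  then show "r * a \<in> gen_ideal n G"
    unfolding gen_ideal_def using A \<open>r \<in> polyS n\<close> by (intro CollectI exI[of _ A] exI[of _ "\<lambda>g. r * c g"]) (auto intro: polyS_mult)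
qed

lemma sum_single_lookup: "(\<Sum>m\<in>Poly_Mapping.keys p. Poly_Mapping.single m (Poly_Mapping.lookup p m)) = p"
proof (rule poly_mapping_eqI)
  fix k
  have "Poly_Mapping.lookup (\<Sum>m\<in>Poly_Mapping.keys p. Poly_Mapping.single m (Poly_Mapping.lookup p m)) k
      = (\<Sum>m\<in>Poly_Mapping.keys p. if m = k then Poly_Mapping.lookup p m else 0)"
    unfolding lookup_sum by (intro sum.cong) (auto simp: lookup_single)
  also have "\<dots> = Poly_Mapping.lookup p k"
    by (auto simp: in_keys_iff)
  finally show "Poly_Mapping.lookup (\<Sum>m\<in>Poly_Mapping.keys p. Poly_Mapping.single m (Poly_Mapping.lookup p m)) k
      = Poly_Mapping.lookup p k" .
qed

section \<open>Monomial ideals\<close>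

text \<open>Divisibility of monomials \<open>x\<^sup>e | x\<^sup>m\<close>; the library order on exponent vectors is lexicographic.\<close>

definition mdvd :: "('b \<Rightarrow>\<^sub>0 nat) \<Rightarrow> ('b \<Rightarrow>\<^sub>0 nat) \<Rightarrow> bool" where
  "mdvd e m \<longleftrightarrow> (\<forall>i. Poly_Mapping.lookup e i \<le> Poly_Mapping.lookup m i)"

lemma mdvd_refl [simp]: "mdvd e e"
  by (simp add: mdvd_def)

lemma mdvd_add_left: "mdvd e m \<Longrightarrow> mdvd e (a + m)"
  by (auto simp: mdvd_def lookup_add intro: trans_le_add2)

lemma mdvd_add: "mdvd e m \<Longrightarrow> mdvd e' m' \<Longrightarrow> mdvd (e + e') (m + m')"
  by (auto simp: mdvd_def lookup_add intro: add_mono)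

lemma mdvd_diff_add: "mdvd e m \<Longrightarrow> m - e + e = m"
  by (intro poly_mapping_eqI) (auto simp: mdvd_def lookup_add lookup_minus)

definition exps_in :: "nat \<Rightarrow> (nat \<Rightarrow>\<^sub>0 nat) set \<Rightarrow> bool" where
  "exps_in n E \<longleftrightarrow> (\<forall>e\<in>E. Poly_Mapping.keys e \<subseteq> {1..n})"

definition monomial_ideal :: "nat \<Rightarrow> (nat \<Rightarrow>\<^sub>0 nat) set \<Rightarrow> 'a::field mpoly set" where
  "monomial_ideal n E = {p \<in> polyS n. \<forall>m\<in>Poly_Mapping.keys p. \<exists>e\<in>E. mdvd e m}"

lemma is_ideal_monomial_ideal: "is_ideal n (monomial_ideal n E)"
  unfolding is_ideal_def
proof (intro conjI ballI)
  fix a b :: "'a::field mpoly" assume "a \<in> monomial_ideal n E" "b \<in> monomial_ideal n E"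
  then show "a + b \<in> monomial_ideal n E"
    using keys_add[of a b] by (auto simp: monomial_ideal_def intro: polyS_add)
next
  fix a r :: "'a::field mpoly" assume a: "a \<in> monomial_ideal n E" and r: "r \<in> polyS n"
  have "\<exists>e\<in>E. mdvd e m" if "m \<in> Poly_Mapping.keys (r * a)" for m
  proof -
    obtain x y where "m = x + y" "y \<in> Poly_Mapping.keys a"
      using keys_mult \<open>m \<in> Poly_Mapping.keys (r * a)\<close> by blast
    then show ?thesis using a mdvd_add_left unfolding monomial_ideal_def by blast
  qed
  with a r show "r * a \<in> monomial_ideal n E"
    by (auto simp: monomial_ideal_def intro: polyS_mult)
qed (auto simp: monomial_ideal_def)

lemma monomial_mem_monomial_ideal:
  "exps_in n E \<Longrightarrow> e \<in> E \<Longrightarrow> Poly_Mapping.single e 1 \<in> monomial_ideal n E"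
  by (force simp: monomial_ideal_def exps_in_def intro: polyS_single)

lemma monomial_ideal_eq_gen_ideal:
  assumes E: "exps_in n E"
  shows "monomial_ideal n E = gen_ideal n ((\<lambda>e. Poly_Mapping.single e 1) ` E)"
proof
  have gens: "(\<lambda>e. Poly_Mapping.single e 1) ` E \<subseteq> (polyS n :: 'a mpoly set)"
    using E polyS_single unfolding exps_in_def by blast
  show "gen_ideal n ((\<lambda>e. Poly_Mapping.single e 1) ` E) \<subseteq> (monomial_ideal n E :: 'a mpoly set)"
    using E by (intro gen_ideal_least is_ideal_monomial_ideal) (auto intro: monomial_mem_monomial_ideal)
  show "monomial_ideal n E \<subseteq> (gen_ideal n ((\<lambda>e. Poly_Mapping.single e 1) ` E) :: 'a mpoly set)"
  proof
    fix p :: "'a mpoly" assume p: "p \<in> monomial_ideal n E"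
    have "Poly_Mapping.single m (Poly_Mapping.lookup p m) \<in> gen_ideal n ((\<lambda>e. Poly_Mapping.single e 1) ` E)"
      if m: "m \<in> Poly_Mapping.keys p" for m
    proof -
      obtain e where e: "e \<in> E" "mdvd e m"
        using p m by (auto simp: monomial_ideal_def)
      have "Poly_Mapping.keys (m - e) \<subseteq> Poly_Mapping.keys m"
        by (auto simp: in_keys_iff lookup_minus)
      moreover have "Poly_Mapping.keys m \<subseteq> {1..n}"
        using p m unfolding monomial_ideal_def polyS_def by blast
      ultimately have "Poly_Mapping.keys (m - e) \<subseteq> {1..n}" by blast
      then have "Poly_Mapping.single (m - e) (Poly_Mapping.lookup p m) * Poly_Mapping.single e 1
          \<in> gen_ideal n ((\<lambda>e. Poly_Mapping.single e 1) ` E)"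
        using e(1) by (intro gen_ideal_mult_generator polyS_single) auto
      then show ?thesis
        by (simp add: mult_single mdvd_diff_add[OF e(2)])
    qed
    then have "(\<Sum>m\<in>Poly_Mapping.keys p. Poly_Mapping.single m (Poly_Mapping.lookup p m))
        \<in> gen_ideal n ((\<lambda>e. Poly_Mapping.single e 1) ` E)"
      by (intro ideal_sum_mem[OF is_ideal_gen_ideal[OF gens]])
    then show "p \<in> gen_ideal n ((\<lambda>e. Poly_Mapping.single e 1) ` E)"
      by (simp add: sum_single_lookup)
  qed
qed

lemma exps_in_plus: "exps_in n A \<Longrightarrow> exps_in n B \<Longrightarrow> exps_in n (A + B)"
  unfolding exps_in_def by (metis Un_least keys_add_nat set_plus_elim)

lemma ideal_prod_monomial_ideal:
  assumes A: "exps_in n A" and B: "exps_in n B"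
  shows "ideal_prod n (monomial_ideal n A) (monomial_ideal n B) = (monomial_ideal n (A + B) :: 'a::field mpoly set)"
proof
  show "ideal_prod n (monomial_ideal n A) (monomial_ideal n B) \<subseteq> (monomial_ideal n (A + B) :: 'a mpoly set)"
    unfolding ideal_prod_def
  proof (intro gen_ideal_least is_ideal_monomial_ideal subsetI, elim CollectE exE conjE)
    fix p a b :: "'a mpoly"
    assume p: "p = a * b" and a: "a \<in> monomial_ideal n A" and b: "b \<in> monomial_ideal n B"
    have "\<exists>e\<in>A + B. mdvd e m" if "m \<in> Poly_Mapping.keys (a * b)" for m
    proof -
      obtain x y where xy: "m = x + y" "x \<in> Poly_Mapping.keys a" "y \<in> Poly_Mapping.keys b"
        using keys_mult \<open>m \<in> Poly_Mapping.keys (a * b)\<close> by blast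
      obtain \<alpha> where "\<alpha> \<in> A" "mdvd \<alpha> x"
        using a xy by (auto simp: monomial_ideal_def)
      moreover obtain \<beta> where "\<beta> \<in> B" "mdvd \<beta> y"
        using b xy by (auto simp: monomial_ideal_def)
      ultimately show ?thesis using xy mdvd_add set_plus_intro by metis
    qed
    with a b show "p \<in> monomial_ideal n (A + B)"
      unfolding p by (auto simp: monomial_ideal_def intro: polyS_mult)
  qed
  have "(\<lambda>e. Poly_Mapping.single e 1) ` (A + B)
      \<subseteq> {a * b |a b. a \<in> monomial_ideal n A \<and> (b :: 'a mpoly) \<in> monomial_ideal n B}"
  proof (rule image_subsetI, elim set_plus_elim)
    fix e a b assume "e = a + b" "a \<in> A" "b \<in> B"
    then show "Poly_Mapping.single e 1 \<in> {a * b |a b. a \<in> monomial_ideal n A \<and> (b :: 'a mpoly) \<in> monomial_ideal n B}"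
      using monomial_mem_monomial_ideal[OF A] monomial_mem_monomial_ideal[OF B] by (force simp: mult_single)
  qed
  then show "monomial_ideal n (A + B) \<subseteq> (ideal_prod n (monomial_ideal n A) (monomial_ideal n B) :: 'a mpoly set)"
    unfolding ideal_prod_def monomial_ideal_eq_gen_ideal[OF exps_in_plus[OF A B]] by (rule gen_ideal_mono)
qed

fun exps_power :: "(nat \<Rightarrow>\<^sub>0 nat) set \<Rightarrow> nat \<Rightarrow> (nat \<Rightarrow>\<^sub>0 nat) set" where
  "exps_power E 0 = {0}"
| "exps_power E (Suc s) = exps_power E s + E"

lemma exps_in_exps_power: "exps_in n E \<Longrightarrow> exps_in n (exps_power E s)"
  by (induction s) (simp_all add: exps_in_plus, simp add: exps_in_def)

lemma ideal_pow_monomial_ideal: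
  assumes "exps_in n E"
  shows "ideal_pow n (monomial_ideal n E) s = (monomial_ideal n (exps_power E s) :: 'a::field mpoly set)"
proof (induction s)
  case 0
  show ?case by (auto simp: monomial_ideal_def mdvd_def)
next
  case (Suc s)
  then show ?case
    using ideal_prod_monomial_ideal[OF exps_in_exps_power[OF assms] assms] by simp
qed

section \<open>The powers of \<open>\<mathfrak>p\<^sub>F\<close>\<close>

definition deg_on :: "nat set \<Rightarrow> (nat \<Rightarrow>\<^sub>0 nat) \<Rightarrow> nat" where
  "deg_on F m = (\<Sum>i\<in>F. Poly_Mapping.lookup m i)"

text \<open>This is \<open>\<mathfrak>p\<^sub>F\<^sup>s\<close>.\<close>

definition deg_on_ideal :: "nat \<Rightarrow> nat set \<Rightarrow> nat \<Rightarrow> 'a::field mpoly set" where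
  "deg_on_ideal n F s = {p \<in> polyS n. \<forall>m\<in>Poly_Mapping.keys p. s \<le> deg_on F m}"

lemma deg_on_add: "deg_on F (a + b) = deg_on F a + deg_on F b"
  by (simp add: deg_on_def lookup_add sum.distrib)

lemma mdvd_deg_on_le: "mdvd e m \<Longrightarrow> deg_on F e \<le> deg_on F m"
  unfolding deg_on_def mdvd_def by (intro sum_mono) auto

lemma deg_on_keys_mult_ge:
  assumes "\<forall>k\<in>Poly_Mapping.keys p. a \<le> deg_on F k" and "\<forall>k\<in>Poly_Mapping.keys q. b \<le> deg_on F k"
    and "k \<in> Poly_Mapping.keys (p * q)"
  shows "a + b \<le> deg_on F k"
proof -
  obtain x y where "k = x + y" "x \<in> Poly_Mapping.keys p" "y \<in> Poly_Mapping.keys q"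
    using keys_mult assms(3) by blast
  with assms(1,2) show ?thesis by (fastforce simp: deg_on_add intro: add_mono)
qed

lemma deg_on_ideal_mult:
  "p \<in> deg_on_ideal n F a \<Longrightarrow> q \<in> deg_on_ideal n F b \<Longrightarrow> p * q \<in> deg_on_ideal n F (a + b)"
  by (auto simp: deg_on_ideal_def intro: polyS_mult deg_on_keys_mult_ge)

lemma deg_on_ideal_0 [simp]: "deg_on_ideal n F 0 = polyS n"
  by (simp add: deg_on_ideal_def)

lemma is_ideal_deg_on_ideal: "is_ideal n (deg_on_ideal n F s)"
  unfolding is_ideal_def
proof (intro conjI ballI)
  fix a b :: "'a::field mpoly" assume "a \<in> deg_on_ideal n F s" "b \<in> deg_on_ideal n F s"
  then show "a + b \<in> deg_on_ideal n F s"
    using keys_add[of a b] by (auto simp: deg_on_ideal_def intro: polyS_add)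
next
  fix a r :: "'a::field mpoly" assume "a \<in> deg_on_ideal n F s" "r \<in> polyS n"
  then show "r * a \<in> deg_on_ideal n F s"
    using deg_on_ideal_mult[of r n F 0 a s] by simp
qed (auto simp: deg_on_ideal_def)

lemma var_power_mem_deg_on_ideal:
  assumes "finite F" and "i \<in> F" and "i \<in> {1..n}"
  shows "var i ^ s \<in> deg_on_ideal n F s"
proof (induction s)
  case (Suc s)
  have "deg_on F (Poly_Mapping.single i 1) = 1"
    using assms(1,2) by (simp add: deg_on_def lookup_single when_def)
  then have "var i \<in> deg_on_ideal n F 1"
    using var_in_polyS[OF assms(3)] by (simp add: deg_on_ideal_def var_def)
  from deg_on_ideal_mult[OF this Suc] show ?case by simp
qed simp

definition restrict_keys :: "((nat \<Rightarrow>\<^sub>0 nat) \<Rightarrow> bool) \<Rightarrow> 'a::field mpoly \<Rightarrow> 'a mpoly" where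
  "restrict_keys P p = Poly_Mapping.mapp (\<lambda>m c. if P m then c else 0) p"

lemma lookup_restrict_keys:
  "Poly_Mapping.lookup (restrict_keys P p) m = (if P m then Poly_Mapping.lookup p m else 0)"
  unfolding restrict_keys_def lookup_mapp by (auto simp: when_def in_keys_iff)

lemma restrict_keys_split: "p = restrict_keys P p + restrict_keys (\<lambda>m. \<not> P m) p"
  by (rule poly_mapping_eqI) (simp add: lookup_add lookup_restrict_keys)

lemma keys_restrict_keys:
  "Poly_Mapping.keys (restrict_keys P p) = {m \<in> Poly_Mapping.keys p. P m}"
  by (auto simp: in_keys_iff lookup_restrict_keys split: if_splits)

lemma deg_on_split_lowest:
  fixes g :: "'a::field mpoly" and F :: "nat set"
  assumes "g \<noteq> 0"
  defines "d \<equiv> Min (deg_on F ` Poly_Mapping.keys g)"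
  obtains g1 g2 where "g = g1 + g2" and "g1 \<noteq> 0"
    and "\<forall>k\<in>Poly_Mapping.keys g1. deg_on F k = d" and "\<forall>k\<in>Poly_Mapping.keys g2. d + 1 \<le> deg_on F k"
proof
  have d: "d \<in> deg_on F ` Poly_Mapping.keys g" "\<forall>k\<in>Poly_Mapping.keys g. d \<le> deg_on F k"
    using assms(1) unfolding d_def by (auto intro: Min_in)
  show "g = restrict_keys (\<lambda>m. deg_on F m = d) g + restrict_keys (\<lambda>m. deg_on F m \<noteq> d) g"
    by (rule restrict_keys_split)
  show "restrict_keys (\<lambda>m. deg_on F m = d) g \<noteq> 0"
    using d(1) by (auto simp: keys_restrict_keys simp flip: keys_eq_empty)
  show "\<forall>k\<in>Poly_Mapping.keys (restrict_keys (\<lambda>m. deg_on F m = d) g). deg_on F k = d"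
    by (simp add: keys_restrict_keys)
  show "\<forall>k\<in>Poly_Mapping.keys (restrict_keys (\<lambda>m. deg_on F m \<noteq> d) g). d + 1 \<le> deg_on F k"
    using d(2) by (auto simp: keys_restrict_keys)
qed

text \<open>In the product of the parts of least \<open>F\<close>-degree no other product of parts contributes.\<close>

lemma deg_on_min_key_mult:
  fixes g h :: "'a::field mpoly" and F :: "nat set"
  assumes "g \<noteq> 0" and "h \<noteq> 0"
  defines "dg \<equiv> Min (deg_on F ` Poly_Mapping.keys g)" and "dh \<equiv> Min (deg_on F ` Poly_Mapping.keys h)"
  shows "\<exists>k\<in>Poly_Mapping.keys (g * h). deg_on F k = dg + dh"
proof -
  obtain g1 g2 where g: "g = g1 + g2" "g1 \<noteq> 0"
    "\<forall>k\<in>Poly_Mapping.keys g1. deg_on F k = dg" "\<forall>k\<in>Poly_Mapping.keys g2. dg + 1 \<le> deg_on F k"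
    using deg_on_split_lowest[OF assms(1)] unfolding dg_def by blast
  obtain h1 h2 where h: "h = h1 + h2" "h1 \<noteq> 0"
    "\<forall>k\<in>Poly_Mapping.keys h1. deg_on F k = dh" "\<forall>k\<in>Poly_Mapping.keys h2. dh + 1 \<le> deg_on F k"
    using deg_on_split_lowest[OF assms(2)] unfolding dh_def by blast
  have low1: "\<forall>k\<in>Poly_Mapping.keys g1. dg \<le> deg_on F k" "\<forall>k\<in>Poly_Mapping.keys h1. dh \<le> deg_on F k"
    using g(3) h(3) by simp_all
  have "g1 * h1 \<noteq> 0"
    using g(2) h(2) by simp
  then obtain k where k: "k \<in> Poly_Mapping.keys (g1 * h1)"
    using keys_eq_empty by blast
  have dk: "deg_on F k = dg + dh"
  proof -
    obtain x y where "k = x + y" "x \<in> Poly_Mapping.keys g1" "y \<in> Poly_Mapping.keys h1"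
      using keys_mult k by blast
    with g(3) h(3) show ?thesis by (simp add: deg_on_add)
  qed
  define X where "X = g1 * h2 + g2 * h1 + g2 * h2"
  have "dg + dh < deg_on F k'" if "k' \<in> Poly_Mapping.keys X" for k'
  proof -
    have "k' \<in> Poly_Mapping.keys (g1 * h2) \<or> k' \<in> Poly_Mapping.keys (g2 * h1) \<or> k' \<in> Poly_Mapping.keys (g2 * h2)"
      using that keys_add[of "g1 * h2 + g2 * h1" "g2 * h2"] keys_add[of "g1 * h2" "g2 * h1"]
      unfolding X_def by blast
    then have "dg + (dh + 1) \<le> deg_on F k' \<or> dg + 1 + dh \<le> deg_on F k' \<or> dg + 1 + (dh + 1) \<le> deg_on F k'"
      using deg_on_keys_mult_ge[OF low1(1) h(4)] deg_on_keys_mult_ge[OF g(4) low1(2)]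
        deg_on_keys_mult_ge[OF g(4) h(4)] by blast
    then show ?thesis by linarith
  qed
  then have "k \<notin> Poly_Mapping.keys X"
    using dk less_irrefl by metis
  moreover have "g * h = g1 * h1 + X"
    unfolding X_def g(1) h(1) by (simp add: distrib_left distrib_right add.assoc)
  ultimately have "k \<in> Poly_Mapping.keys (g * h)"
    using k by (simp add: in_keys_iff lookup_add)
  with dk show ?thesis by blast
qed

lemma deg_on_ideal_primary:
  assumes "g \<in> polyS n" and "h \<in> polyS n" and "g * h \<in> deg_on_ideal n F s"
    and "g \<notin> deg_on_ideal n F 1"
  shows "h \<in> deg_on_ideal n F s"
proof (rule ccontr)
  assume "h \<notin> deg_on_ideal n F s"
  then obtain mh where mh: "mh \<in> Poly_Mapping.keys h" "deg_on F mh < s"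
    using assms(2) unfolding deg_on_ideal_def by force
  obtain mg where mg: "mg \<in> Poly_Mapping.keys g" "deg_on F mg = 0"
    using assms(1,4) unfolding deg_on_ideal_def by force
  have "Min (deg_on F ` Poly_Mapping.keys g) = 0"
    using mg by (metis Min_le finite_imageI finite_keys image_eqI le_zero_eq)
  moreover have "Min (deg_on F ` Poly_Mapping.keys h) < s"
    using mh by (meson Min_le finite_imageI finite_keys image_eqI le_less_trans)
  moreover have "g \<noteq> 0" "h \<noteq> 0"
    using mg mh by auto
  ultimately obtain k where "k \<in> Poly_Mapping.keys (g * h)" "deg_on F k < s"
    using deg_on_min_key_mult[of g h F] by fastforce
  then show False
    using assms(3) unfolding deg_on_ideal_def by auto
qed

lemma prime_ideal_deg_on_ideal_1: "prime_ideal n (deg_on_ideal n F 1)"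
  unfolding prime_ideal_def
proof (intro conjI ballI impI)
  have "1 \<notin> deg_on_ideal n F 1"
    by (simp add: deg_on_ideal_def deg_on_def)
  then show "deg_on_ideal n F 1 \<noteq> polyS n" by auto
qed (auto simp: is_ideal_deg_on_ideal dest: deg_on_ideal_primary)

lemma prime_of_eq_deg_on_ideal:
  assumes F: "F \<subseteq> {1..n}"
  shows "prime_of n F = deg_on_ideal n F 1"
proof -
  define U where "U = (\<lambda>i. Poly_Mapping.single i (1::nat)) ` F"
  have "exps_in n U"
    using F by (auto simp: exps_in_def U_def)
  moreover have "var ` F = ((\<lambda>e. Poly_Mapping.single e 1) ` U :: 'a::field mpoly set)"
    unfolding U_def var_def by auto
  ultimately have "prime_of n F = (monomial_ideal n U :: 'a::field mpoly set)"
    unfolding prime_of_def by (simp only: monomial_ideal_eq_gen_ideal)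
  moreover have "(\<exists>e\<in>U. mdvd e m) \<longleftrightarrow> 1 \<le> deg_on F m" for m
  proof -
    have "mdvd (Poly_Mapping.single i 1) m \<longleftrightarrow> Poly_Mapping.lookup m i \<noteq> 0" for i
      by (auto simp: mdvd_def lookup_single when_def)
    then have "(\<exists>e\<in>U. mdvd e m) \<longleftrightarrow> (\<exists>i\<in>F. Poly_Mapping.lookup m i \<noteq> 0)"
      unfolding U_def by blast
    also have "\<dots> \<longleftrightarrow> deg_on F m \<noteq> 0"
      unfolding deg_on_def using finite_subset[OF F] by simp
    finally show ?thesis by linarith
  qed
  ultimately show ?thesis
    by (simp add: monomial_ideal_def deg_on_ideal_def)
qed

section \<open>The path ideal\<close>

definition window :: "nat \<Rightarrow> nat \<Rightarrow> nat \<Rightarrow>\<^sub>0 nat" where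
  "window t i = (\<Sum>j\<in>{i..i+t-1}. Poly_Mapping.single j 1)"

lemma lookup_window: "Poly_Mapping.lookup (window t i) j = (if i \<le> j \<and> j \<le> i + t - 1 then 1 else 0)"
proof -
  have "Poly_Mapping.lookup (window t i) j = (\<Sum>k\<in>{i..i+t-1}. if k = j then 1 else 0)"
    unfolding window_def lookup_sum by (intro sum.cong) (auto simp: lookup_single)
  then show ?thesis by auto
qed

lemma prod_var: "finite A \<Longrightarrow> (\<Prod>j\<in>A. var j) = Poly_Mapping.single (\<Sum>j\<in>A. Poly_Mapping.single j 1) 1"
  by (induction A rule: finite_induct) (auto simp: var_def mult_single)

lemma path_mon_eq_single_window: "path_mon t i = Poly_Mapping.single (window t i) 1"
  unfolding path_mon_def window_def by (rule prod_var) simp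

definition path_exps :: "nat \<Rightarrow> nat \<Rightarrow> (nat \<Rightarrow>\<^sub>0 nat) set" where
  "path_exps n t = {window t i | i. 1 \<le> i \<and> i \<le> n - t + 1}"

lemma exps_in_path_exps:
  assumes "1 \<le> t" and "t \<le> n"
  shows "exps_in n (path_exps n t)"
  unfolding exps_in_def path_exps_def
proof safe
  fix i j assume "1 \<le> i" "i \<le> n - t + 1" "j \<in> Poly_Mapping.keys (window t i)"
  with assms show "j \<in> {1..n}"
    by (auto simp: in_keys_iff lookup_window split: if_splits)
qed

lemma path_ideal_eq_monomial_ideal:
  assumes "1 \<le> t" and "t \<le> n"
  shows "path_ideal n t = monomial_ideal n (path_exps n t)"
proof -
  have "{path_mon t i | i. 1 \<le> i \<and> i \<le> n - t + 1} = ((\<lambda>e. Poly_Mapping.single e 1) ` path_exps n t :: 'a::field mpoly set)"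
    unfolding path_exps_def path_mon_eq_single_window by blast
  then show ?thesis
    unfolding path_ideal_def by (simp only: monomial_ideal_eq_gen_ideal[OF exps_in_path_exps[OF assms]])
qed

section \<open>Minimal vertex covers of the path\<close>

text \<open>Minimality of a cover is witnessed by a private window for each element.\<close>

definition covers :: "nat \<Rightarrow> nat \<Rightarrow> nat set \<Rightarrow> bool" where
  "covers n t F \<longleftrightarrow> (\<forall>w. 1 \<le> w \<and> w \<le> n - t + 1 \<longrightarrow> (\<exists>x\<in>F. w \<le> x \<and> x \<le> w + t - 1))"

definition private_window :: "nat \<Rightarrow> nat \<Rightarrow> nat set \<Rightarrow> nat \<Rightarrow> nat \<Rightarrow> bool" where
  "private_window n t F x w \<longleftrightarrow> 1 \<le> w \<and> w \<le> n - t + 1 \<and> w \<le> x \<and> x \<le> w + t - 1 \<and>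
      (\<forall>y\<in>F. w \<le> y \<and> y \<le> w + t - 1 \<longrightarrow> y = x)"

definition minimal_cover :: "nat \<Rightarrow> nat \<Rightarrow> nat set \<Rightarrow> bool" where
  "minimal_cover n t F \<longleftrightarrow> F \<subseteq> {1..n} \<and> covers n t F \<and> (\<forall>x\<in>F. \<exists>w. private_window n t F x w)"

lemma covers_Diff_no_private_window:
  assumes "covers n t F" and "\<nexists>w. private_window n t F x w"
  shows "covers n t (F - {x})"
  unfolding covers_def
proof (intro allI impI)
  fix w assume w: "1 \<le> w \<and> w \<le> n - t + 1"
  then obtain y where y: "y \<in> F" "w \<le> y \<and> y \<le> w + t - 1"
    using assms(1) unfolding covers_def by blast
  show "\<exists>x'\<in>F - {x}. w \<le> x' \<and> x' \<le> w + t - 1"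
  proof (cases "y = x")
    case True
    then show ?thesis using assms(2) w y unfolding private_window_def by blast
  qed (use y in blast)
qed

lemma exists_minimal_subcover:
  assumes "F \<subseteq> {1..n}" and "covers n t F"
  shows "\<exists>G\<subseteq>F. minimal_cover n t G"
  using finite_subset[OF assms(1) finite_atLeastAtMost] assms
proof (induction "card F" arbitrary: F rule: less_induct)
  case less
  show ?case
  proof (cases "\<forall>x\<in>F. \<exists>w. private_window n t F x w")
    case True
    then show ?thesis using less.prems by (auto simp: minimal_cover_def)
  next
    case False
    then obtain x where x: "x \<in> F" "\<nexists>w. private_window n t F x w" by blast
    have "card (F - {x}) < card F"
      using less.prems(1) x(1) by (rule card_Diff1_less)
    then obtain G where "G \<subseteq> F - {x}" "minimal_cover n t G"
      using less.hyps[of "F - {x}"] less.prems covers_Diff_no_private_window[OF less.prems(3) x(2)] by blast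
    then show ?thesis by blast
  qed
qed

abbreviation nth_elem :: "nat set \<Rightarrow> nat \<Rightarrow> nat" where
  "nth_elem F j \<equiv> sorted_list_of_set F ! j"

lemma nth_elem_less_iff:
  assumes "finite F" and "i < card F" and "j < card F"
  shows "nth_elem F i < nth_elem F j \<longleftrightarrow> i < j"
proof -
  have "sorted_wrt (<) (sorted_list_of_set F)" "length (sorted_list_of_set F) = card F"
    using assms(1) by (simp_all add: strict_sorted_list_of_set)
  then show ?thesis
    using assms(2,3) sorted_wrt_nth_less by (metis linorder_neqE_nat not_less_iff_gr_or_eq)
qed

lemma nth_elem_le_iff:
  "finite F \<Longrightarrow> i < card F \<Longrightarrow> j < card F \<Longrightarrow> nth_elem F i \<le> nth_elem F j \<longleftrightarrow> i \<le> j"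
  using nth_elem_less_iff[of F j i] by (metis not_less)

lemma nth_elem_in: "finite F \<Longrightarrow> j < card F \<Longrightarrow> nth_elem F j \<in> F"
  by (metis length_sorted_list_of_set nth_mem set_sorted_list_of_set)

lemma ex_nth_elem_eq: "finite F \<Longrightarrow> y \<in> F \<Longrightarrow> \<exists>j<card F. y = nth_elem F j"
  by (metis in_set_conv_nth length_sorted_list_of_set set_sorted_list_of_set)

lemma C_setD:
  assumes "F \<in> C_set n t"
  shows C_set_subset: "F \<subseteq> {1..n}" and C_set_nonempty: "F \<noteq> {}"
    and C_set_first: "1 \<le> nth_elem F 0" "nth_elem F 0 \<le> t"
    and C_set_second: "2 \<le> card F \<Longrightarrow> t < nth_elem F 1"
    and C_set_gap: "j + 1 < card F \<Longrightarrow> nth_elem F (j + 1) - nth_elem F j \<le> t"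
    and C_set_gap2: "j + 2 < card F \<Longrightarrow> t < nth_elem F (j + 2) - nth_elem F j"
    and C_set_penultimate: "2 \<le> card F \<Longrightarrow> nth_elem F (card F - 2) < n - t + 1"
    and C_set_last: "n - t + 1 \<le> nth_elem F (card F - 1)"
  using assms by (simp_all add: C_set_def Let_def)

lemma C_setI:
  assumes "F \<subseteq> {1..n}" and "F \<noteq> {}"
    and "1 \<le> nth_elem F 0" "nth_elem F 0 \<le> t"
    and "2 \<le> card F \<Longrightarrow> t < nth_elem F 1"
    and "\<And>j. j + 1 < card F \<Longrightarrow> nth_elem F (j + 1) - nth_elem F j \<le> t"
    and "\<And>j. j + 2 < card F \<Longrightarrow> t < nth_elem F (j + 2) - nth_elem F j"
    and "2 \<le> card F \<Longrightarrow> nth_elem F (card F - 2) < n - t + 1"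
    and "n - t + 1 \<le> nth_elem F (card F - 1)"
  shows "F \<in> C_set n t"
proof -
  have fin: "finite F" using assms(1) finite_subset by blast
  have "card F \<noteq> 0" using fin assms(2) by simp
  then have "nth_elem F (card F - 1) \<in> F" using nth_elem_in[OF fin] by simp
  moreover have "nth_elem F j < nth_elem F (j + 1)" if "j + 1 < card F" for j
    using nth_elem_less_iff[OF fin, of j "j + 1"] that by simp
  ultimately show ?thesis
    using assms by (auto simp: C_set_def Let_def Suc_le_eq)
qed

lemma C_set_finite: "F \<in> C_set n t \<Longrightarrow> finite F"
  by (meson C_set_subset finite_atLeastAtMost finite_subset)

lemma C_set_card_pos: "F \<in> C_set n t \<Longrightarrow> 0 < card F"
  using C_set_finite C_set_nonempty by (simp add: card_gt_0_iff)

lemma C_set_covers: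
  assumes F: "F \<in> C_set n t"
  shows "covers n t F"
  unfolding covers_def
proof (intro allI impI)
  fix w assume w: "1 \<le> w \<and> w \<le> n - t + 1"
  have fin: "finite F" and r: "0 < card F" using F by (simp_all add: C_set_finite C_set_card_pos)
  define k where "k = (LEAST k. k < card F \<and> w \<le> nth_elem F k)"
  have "\<exists>k. k < card F \<and> w \<le> nth_elem F k"
    using C_set_last[OF F] w r by (intro exI[of _ "card F - 1"]) simp
  then have "k < card F \<and> w \<le> nth_elem F k"
    unfolding k_def by (rule LeastI_ex)
  then have k: "k < card F" "w \<le> nth_elem F k"
    by blast+
  have "nth_elem F k \<le> w + t - 1"
  proof (cases k)
    case 0
    then show ?thesis using C_set_first[OF F] w by (simp; arith)
  next
    case (Suc k')
    have "\<not> (k' < card F \<and> w \<le> nth_elem F k')"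
      using not_less_Least[of k' "\<lambda>k. k < card F \<and> w \<le> nth_elem F k"] Suc unfolding k_def by simp
    then have "nth_elem F k' < w"
      using Suc k by simp
    moreover have "nth_elem F k - nth_elem F k' \<le> t"
      using C_set_gap[OF F, of k'] Suc k by simp
    ultimately show ?thesis by linarith
  qed
  then show "\<exists>x\<in>F. w \<le> x \<and> x \<le> w + t - 1"
    using k nth_elem_in[OF fin k(1)] by blast
qed

lemma C_set_private_window_first:
  assumes F: "F \<in> C_set n t"
  shows "private_window n t F (nth_elem F 0) 1"
  unfolding private_window_def
proof (intro conjI ballI impI)
  fix y assume y: "y \<in> F" "1 \<le> y \<and> y \<le> 1 + t - 1"
  obtain j where j: "j < card F" "y = nth_elem F j"
    using ex_nth_elem_eq[OF C_set_finite[OF F] y(1)] by blast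
  show "y = nth_elem F 0"
  proof (cases j)
    case (Suc j')
    then have "nth_elem F 1 \<le> y"
      using nth_elem_le_iff[OF C_set_finite[OF F], of 1 j] j by simp
    then show ?thesis using C_set_second[OF F] y j Suc by simp
  qed (use j in simp)
qed (use C_set_first[OF F] in simp_all)

lemma C_set_private_window_last:
  assumes F: "F \<in> C_set n t" and k: "0 < k" "k = card F - 1"
  shows "private_window n t F (nth_elem F k) (n - t + 1)"
  unfolding private_window_def
proof (intro conjI ballI impI)
  have fin: "finite F" using C_set_finite[OF F] .
  have "nth_elem F k \<in> F" using nth_elem_in[OF fin] k by simp
  then have "nth_elem F k \<le> n" using C_set_subset[OF F] by auto
  then show "nth_elem F k \<le> n - t + 1 + t - 1" by arith
  fix y assume y: "y \<in> F" "n - t + 1 \<le> y \<and> y \<le> n - t + 1 + t - 1"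
  obtain j where j: "j < card F" "y = nth_elem F j"
    using ex_nth_elem_eq[OF fin y(1)] by blast
  show "y = nth_elem F k"
  proof (rule ccontr)
    assume "y \<noteq> nth_elem F k"
    then have "j \<noteq> k"
      using j by blast
    then have "j \<le> card F - 2"
      using j k by linarith
    then have "nth_elem F j \<le> nth_elem F (card F - 2)"
      using nth_elem_le_iff[OF fin, of j "card F - 2"] j k by simp
    then show False using C_set_penultimate[OF F] y j k by simp
  qed
qed (use C_set_last[OF F] k in simp_all)

lemma C_set_private_window_middle:
  assumes F: "F \<in> C_set n t" and t: "1 \<le> t" and k: "0 < k" "k + 1 < card F"
  shows "private_window n t F (nth_elem F k) (nth_elem F (k - 1) + 1)"
proof -
  have fin: "finite F" using C_set_finite[OF F] .
  have gap: "nth_elem F k - nth_elem F (k - 1) \<le> t"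
    using C_set_gap[OF F, of "k - 1"] k by simp
  have gap2: "t < nth_elem F (k + 1) - nth_elem F (k - 1)"
    using C_set_gap2[OF F, of "k - 1"] k by simp
  have ord: "nth_elem F (k - 1) < nth_elem F k" "nth_elem F k < nth_elem F (k + 1)"
    using nth_elem_less_iff[OF fin] k by auto
  have "nth_elem F (k + 1) \<le> n"
    using nth_elem_in[OF fin k(2)] C_set_subset[OF F] by auto
  moreover have "y = nth_elem F k"
    if y: "y \<in> F" "nth_elem F (k - 1) + 1 \<le> y" "y \<le> nth_elem F (k - 1) + 1 + t - 1" for y
  proof -
    obtain j where j: "j < card F" "y = nth_elem F j"
      using ex_nth_elem_eq[OF fin y(1)] by blast
    have "\<not> j \<le> k - 1"
      using nth_elem_le_iff[OF fin, of j "k - 1"] j k y(2) by auto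
    moreover have "\<not> k + 1 \<le> j"
      using nth_elem_le_iff[OF fin, of "k + 1" j] j k y(3) gap2 ord t by auto
    ultimately have "j = k" using k(1) by linarith
    then show ?thesis using j by simp
  qed
  ultimately show ?thesis
    unfolding private_window_def using gap gap2 ord t by auto
qed

lemma C_set_minimal_cover:
  assumes F: "F \<in> C_set n t" and t: "1 \<le> t"
  shows "minimal_cover n t F"
  unfolding minimal_cover_def
proof (intro conjI ballI)
  fix x assume "x \<in> F"
  then obtain k where k: "k < card F" "x = nth_elem F k"
    using ex_nth_elem_eq[OF C_set_finite[OF F]] by blast
  consider "k = 0" | "0 < k" "k = card F - 1" | "0 < k" "k + 1 < card F"
    using k(1) by linarith
  then show "\<exists>w. private_window n t F x w"
    by cases (use k C_set_private_window_first[OF F] C_set_private_window_last[OF F]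
        C_set_private_window_middle[OF F t] in blast)+
qed (use C_set_subset[OF F] C_set_covers[OF F] in auto)

lemma minimal_cover_finite: "minimal_cover n t F \<Longrightarrow> finite F"
  unfolding minimal_cover_def by (meson finite_atLeastAtMost finite_subset)

lemma minimal_cover_first:
  assumes M: "minimal_cover n t F"
  shows "F \<noteq> {}" and "1 \<le> nth_elem F 0" and "nth_elem F 0 \<le> t"
proof -
  have fin: "finite F" using minimal_cover_finite[OF M] .
  obtain x where x: "x \<in> F" "x \<le> t"
    using M unfolding minimal_cover_def covers_def by fastforce
  then show "F \<noteq> {}" by blast
  then have r: "0 < card F" using fin by (simp add: card_gt_0_iff)
  obtain j where j: "j < card F" "x = nth_elem F j"
    using ex_nth_elem_eq[OF fin x(1)] by blast
  have e0: "nth_elem F 0 \<in> F" "nth_elem F 0 \<le> x"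
    using nth_elem_in[OF fin r] nth_elem_le_iff[OF fin r j(1)] j(2) by simp_all
  then show "1 \<le> nth_elem F 0" using M by (force simp: minimal_cover_def)
  show "nth_elem F 0 \<le> t" using e0 x by simp
qed

lemma minimal_cover_last:
  assumes M: "minimal_cover n t F"
  shows "n - t + 1 \<le> nth_elem F (card F - 1)"
proof -
  have fin: "finite F" using minimal_cover_finite[OF M] .
  obtain x where x: "x \<in> F" "n - t + 1 \<le> x"
    using M unfolding minimal_cover_def covers_def by fastforce
  obtain j where "j < card F" "x = nth_elem F j"
    using ex_nth_elem_eq[OF fin x(1)] by blast
  then have "x \<le> nth_elem F (card F - 1)"
    using nth_elem_le_iff[OF fin, of j "card F - 1"] by simp
  then show ?thesis using x by simp
qed

lemma minimal_cover_second:
  assumes M: "minimal_cover n t F" and r: "2 \<le> card F"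
  shows "t < nth_elem F 1"
proof (rule ccontr)
  assume "\<not> t < nth_elem F 1"
  have fin: "finite F" using minimal_cover_finite[OF M] .
  obtain w where w: "private_window n t F (nth_elem F 0) w"
    using M nth_elem_in[OF fin, of 0] r unfolding minimal_cover_def by force
  have ord: "nth_elem F 0 < nth_elem F 1"
    using nth_elem_less_iff[OF fin, of 0 1] r by simp
  then have "nth_elem F 1 = nth_elem F 0"
    using w nth_elem_in[OF fin, of 1] r \<open>\<not> t < nth_elem F 1\<close> unfolding private_window_def by fastforce
  with ord show False by simp
qed

lemma minimal_cover_gap:
  assumes M: "minimal_cover n t F" and j: "j + 1 < card F"
  shows "nth_elem F (j + 1) - nth_elem F j \<le> t"
proof (rule ccontr)
  assume gap: "\<not> nth_elem F (j + 1) - nth_elem F j \<le> t"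
  have fin: "finite F" using minimal_cover_finite[OF M] .
  have "nth_elem F (j + 1) \<le> n"
    using M nth_elem_in[OF fin j] unfolding minimal_cover_def by auto
  then have "nth_elem F j + 1 \<le> n - t + 1" using gap by linarith
  then obtain y where y: "y \<in> F" "nth_elem F j < y" "y \<le> nth_elem F j + t"
    using M unfolding minimal_cover_def covers_def by fastforce
  obtain i where i: "i < card F" "y = nth_elem F i"
    using ex_nth_elem_eq[OF fin y(1)] by blast
  have "j < i" using nth_elem_less_iff[OF fin, of j i] i y j by simp
  moreover have "nth_elem F i < nth_elem F (j + 1)" using i y gap by linarith
  then have "i < j + 1" using nth_elem_less_iff[OF fin, of i "j + 1"] i j by simp
  ultimately show False by simp
qed

lemma minimal_cover_gap2:
  assumes M: "minimal_cover n t F" and j: "j + 2 < card F"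
  shows "t < nth_elem F (j + 2) - nth_elem F j"
proof -
  have fin: "finite F" using minimal_cover_finite[OF M] .
  obtain w where w: "private_window n t F (nth_elem F (j + 1)) w"
    using M nth_elem_in[OF fin, of "j + 1"] j unfolding minimal_cover_def by fastforce
  have ord: "nth_elem F j < nth_elem F (j + 1)" "nth_elem F (j + 1) < nth_elem F (j + 2)"
    using nth_elem_less_iff[OF fin] j by auto
  have "nth_elem F j < w"
    using w nth_elem_in[OF fin, of j] j ord unfolding private_window_def by fastforce
  moreover have "w + t - 1 < nth_elem F (j + 2)"
    using w nth_elem_in[OF fin, of "j + 2"] j ord unfolding private_window_def by fastforce
  moreover have "1 \<le> w" using w unfolding private_window_def by simp
  ultimately show ?thesis by linarith
qed

lemma minimal_cover_penultimate:
  assumes M: "minimal_cover n t F" and r: "2 \<le> card F"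
  shows "nth_elem F (card F - 2) < n - t + 1"
proof -
  have fin: "finite F" using minimal_cover_finite[OF M] .
  obtain w where w: "private_window n t F (nth_elem F (card F - 1)) w"
    using M nth_elem_in[OF fin, of "card F - 1"] r unfolding minimal_cover_def by fastforce
  have ord: "nth_elem F (card F - 2) < nth_elem F (card F - 1)"
    using nth_elem_less_iff[OF fin, of "card F - 2" "card F - 1"] r by simp
  have "nth_elem F (card F - 2) < w"
    using w nth_elem_in[OF fin, of "card F - 2"] r ord unfolding private_window_def by fastforce
  then show ?thesis using w unfolding private_window_def by simp
qed

lemma minimal_cover_C_set:
  assumes M: "minimal_cover n t F"
  shows "F \<in> C_set n t"
  using M[unfolded minimal_cover_def] minimal_cover_first[OF M]
  by (intro C_setI minimal_cover_second[OF M] minimal_cover_gap[OF M] minimal_cover_gap2[OF M]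
      minimal_cover_penultimate[OF M] minimal_cover_last[OF M]) simp_all

lemma C_set_iff_minimal_cover: "1 \<le> t \<Longrightarrow> F \<in> C_set n t \<longleftrightarrow> minimal_cover n t F"
  using C_set_minimal_cover minimal_cover_C_set by blast

section \<open>Powers of the path ideal\<close>

lemma exps_power_deg_on:
  assumes "covers n t F" and "finite F" and "e \<in> exps_power (path_exps n t) s"
  shows "s \<le> deg_on F e"
  using assms(3)
proof (induction s arbitrary: e)
  case (Suc s)
  then obtain b c where bc: "e = b + c" "b \<in> exps_power (path_exps n t) s" "c \<in> path_exps n t"
    by (auto elim: set_plus_elim)
  obtain i where i: "c = window t i" "1 \<le> i" "i \<le> n - t + 1"
    using bc(3) by (auto simp: path_exps_def)
  obtain x where x: "x \<in> F" "i \<le> x" "x \<le> i + t - 1"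
    using assms(1) i unfolding covers_def by blast
  have "Poly_Mapping.lookup c x \<le> deg_on F c"
    unfolding deg_on_def by (rule member_le_sum[OF x(1) _ assms(2)]) simp
  then have "1 \<le> deg_on F c"
    using x i by (simp add: lookup_window)
  then show ?case
    using Suc.IH[OF bc(2)] bc(1) by (simp add: deg_on_add)
qed simp

lemma sum_windows_mem_exps_power:
  assumes "\<And>k. k < s \<Longrightarrow> 1 \<le> g k \<and> g k \<le> n - t + 1"
  shows "(\<Sum>k<s. window t (g k)) \<in> exps_power (path_exps n t) s"
  using assms
proof (induction s)
  case (Suc s)
  have "window t (g s) \<in> path_exps n t"
    using Suc.prems[of s] unfolding path_exps_def by auto
  then show ?case
    using Suc by (auto intro: set_plus_intro)
qed simp

text \<open>A shortest-path recursion: \<open>chain_weight a t j\<close> is the least \<open>a\<close>-weight of a set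
  containing \<open>j\<close> that meets every window inside \<open>{1..j}\<close>; the previous element of such
  a set lies among the \<open>t\<close> positions before \<open>j\<close>, position \<open>0\<close> standing for none.\<close>

function chain_weight :: "(nat \<Rightarrow> nat) \<Rightarrow> nat \<Rightarrow> nat \<Rightarrow> nat" where
  "chain_weight a t 0 = 0"
| "chain_weight a t (Suc j) = a (Suc j) + Min (chain_weight a t ` {Suc j - t..j})"
  by pat_completeness auto
termination
  by (relation "measure (\<lambda>(a, t, j). j)") auto

lemma chain_weight_eq:
  "1 \<le> j \<Longrightarrow> chain_weight a t j = a j + Min (chain_weight a t ` {j - t..j - 1})"
  by (cases j) auto

lemma chain_weight_le:
  "1 \<le> j \<Longrightarrow> i \<in> {j - t..j - 1} \<Longrightarrow> chain_weight a t j \<le> a j + chain_weight a t i"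
  by (simp add: chain_weight_eq)

lemma chain_weight_attained:
  assumes "1 \<le> t" and "1 \<le> j"
  obtains i where "i \<in> {j - t..j - 1}" and "chain_weight a t j = a j + chain_weight a t i"
proof -
  have "Min (chain_weight a t ` {j - t..j - 1}) \<in> chain_weight a t ` {j - t..j - 1}"
    using assms by (intro Min_in) auto
  then show ?thesis
    using that chain_weight_eq[OF assms(2)] by auto
qed

definition meets_windows_upto :: "nat \<Rightarrow> nat \<Rightarrow> nat set \<Rightarrow> bool" where
  "meets_windows_upto t j G \<longleftrightarrow> (\<forall>w. 1 \<le> w \<and> w + t - 1 \<le> j \<longrightarrow> (\<exists>x\<in>G. w \<le> x \<and> x \<le> w + t - 1))"

lemma meets_windows_upto_singleton:
  assumes "1 \<le> j" and "j \<le> t"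
  shows "meets_windows_upto t j {j}"
  unfolding meets_windows_upto_def
proof (intro allI impI)
  fix w assume "1 \<le> w \<and> w + t - 1 \<le> j"
  then have "w = 1" using assms(2) by linarith
  then show "\<exists>x\<in>{j}. w \<le> x \<and> x \<le> w + t - 1" using assms by auto
qed

lemma meets_windows_upto_insert:
  assumes G: "meets_windows_upto t i G" and i: "i \<in> G" "j - t \<le> i" and t: "1 \<le> t"
  shows "meets_windows_upto t j (insert j G)"
  unfolding meets_windows_upto_def
proof (intro allI impI)
  fix w assume w: "1 \<le> w \<and> w + t - 1 \<le> j"
  show "\<exists>x\<in>insert j G. w \<le> x \<and> x \<le> w + t - 1"
  proof (cases "w + t - 1 \<le> i")
    case True
    then show ?thesis using G w unfolding meets_windows_upto_def by blast
  next
    case False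
    show ?thesis
    proof (cases "w \<le> i")
      case True
      then show ?thesis using False i(1) by (intro bexI[of _ i]) auto
    next
      case False
      then have "w \<le> j \<and> j \<le> w + t - 1" using w i(2) t by linarith
      then show ?thesis by blast
    qed
  qed
qed

lemma chain_weight_realised:
  assumes t: "1 \<le> t" and "1 \<le> j"
  shows "\<exists>G \<subseteq> {1..j}. j \<in> G \<and> sum a G = chain_weight a t j \<and> meets_windows_upto t j G"
  using assms(2)
proof (induction j rule: less_induct)
  case (less j)
  obtain i where i: "i \<in> {j - t..j - 1}" "chain_weight a t j = a j + chain_weight a t i"
    using chain_weight_attained[OF t less.prems] .
  show ?case
  proof (cases "i = 0")
    case True
    then have "j \<le> t" using i by auto
    then show ?thesis
      using True i less.prems meets_windows_upto_singleton[OF less.prems] by (intro exI[of _ "{j}"]) auto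
  next
    case False
    then have "i < j" "1 \<le> i" using i less.prems by auto
    then obtain G where G: "G \<subseteq> {1..i}" "i \<in> G" "sum a G = chain_weight a t i" "meets_windows_upto t i G"
      using less.IH by blast
    have "j \<notin> G" "finite G"
      using G(1) \<open>i < j\<close> finite_subset[OF G(1)] by auto
    moreover have "meets_windows_upto t j (insert j G)"
      using G(4,2) i(1) t by (intro meets_windows_upto_insert) auto
    ultimately show ?thesis
      using G(1-3) i \<open>i < j\<close> less.prems by (intro exI[of _ "insert j G"]) auto
  qed
qed

lemma covers_if_meets_windows_upto:
  assumes "meets_windows_upto t i G" and "i \<in> G" and "n + 1 - t \<le> i" and "t \<le> n"
  shows "covers n t G"
  unfolding covers_def
proof (intro allI impI)
  fix w assume w: "1 \<le> w \<and> w \<le> n - t + 1"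
  show "\<exists>x\<in>G. w \<le> x \<and> x \<le> w + t - 1"
  proof (cases "w + t - 1 \<le> i")
    case False
    have "w \<le> i" using w assms(3,4) by linarith
    with False show ?thesis using assms(2) by (intro bexI[of _ i]) auto
  qed (use assms(1) w in \<open>auto simp: meets_windows_upto_def\<close>)
qed

lemma cover_of_chain_weight:
  assumes t: "1 \<le> t" "t \<le> n"
  shows "\<exists>G \<subseteq> {1..n}. covers n t G \<and> sum a G = Min (chain_weight a t ` {n + 1 - t..n})"
proof -
  have "Min (chain_weight a t ` {n + 1 - t..n}) \<in> chain_weight a t ` {n + 1 - t..n}"
    using t by (intro Min_in) auto
  then obtain i where i: "i \<in> {n + 1 - t..n}" "chain_weight a t i = Min (chain_weight a t ` {n + 1 - t..n})"
    by auto
  then have "1 \<le> i" using t by auto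
  then obtain G where G: "G \<subseteq> {1..i}" "i \<in> G" "sum a G = chain_weight a t i" "meets_windows_upto t i G"
    using chain_weight_realised[OF t(1), of i a] by blast
  have "covers n t G"
    using G(4,2) i(1) t(2) by (intro covers_if_meets_windows_upto) auto
  moreover have "G \<subseteq> {1..n}" using G(1) i(1) by auto
  ultimately show ?thesis
    by (intro exI[of _ G] conjI) (simp_all add: G(3) i(2))
qed

text \<open>Take \<open>q\<close> the last position with value below \<open>k\<close>: the \<open>t\<close> positions after it all have
  value at least \<open>k\<close>, and each exceeds the value at \<open>q\<close> by at most its own weight.\<close>

lemma chain_weight_layer:
  assumes t: "1 \<le> t" "t \<le> n"
    and k: "1 \<le> k" "k \<le> Min (chain_weight a t ` {n + 1 - t..n})"
  shows "\<exists>q. q + t \<le> n \<and>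
    (\<forall>j. q + 1 \<le> j \<and> j \<le> q + t \<longrightarrow> chain_weight a t j - a j < k \<and> k \<le> chain_weight a t j)"
proof -
  define S where "S = {i. i \<le> n \<and> chain_weight a t i < k}"
  define q where "q = Max S"
  have "finite S" "0 \<in> S" using k by (simp_all add: S_def)
  then have q: "q \<in> S" "\<And>i. i \<in> S \<Longrightarrow> i \<le> q"
    unfolding q_def by (auto intro: Max_in)
  have "q + t \<le> n"
  proof (rule ccontr)
    assume "\<not> q + t \<le> n"
    then have "Min (chain_weight a t ` {n + 1 - t..n}) \<le> chain_weight a t q"
      using q(1) by (auto simp: S_def)
    then show False using q(1) k by (auto simp: S_def)
  qed
  moreover have "chain_weight a t j - a j < k \<and> k \<le> chain_weight a t j"
    if j: "q + 1 \<le> j" "j \<le> q + t" for j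
  proof
    show "k \<le> chain_weight a t j"
      using q(2)[of j] j \<open>q + t \<le> n\<close> by (fastforce simp: S_def)
    have "chain_weight a t j \<le> a j + chain_weight a t q"
      using j by (intro chain_weight_le) auto
    then show "chain_weight a t j - a j < k"
      using q(1) by (auto simp: S_def)
  qed
  ultimately show ?thesis by blast
qed

text \<open>A position \<open>j\<close> lies only in windows whose layer \<open>k\<close> satisfies
  \<open>c j - m j \<le> k < c j\<close>, hence in at most \<open>m j\<close> of them.\<close>

lemma mdvd_sum_windows_of_layers:
  assumes "\<And>k j. k < s \<Longrightarrow> f k + 1 \<le> j \<Longrightarrow> j \<le> f k + t \<Longrightarrow>
      c j - Poly_Mapping.lookup m j < k + 1 \<and> k + 1 \<le> c j"
  shows "mdvd (\<Sum>k<s. window t (f k + 1)) m"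
  unfolding mdvd_def
proof
  fix j
  have "Poly_Mapping.lookup (\<Sum>k<s. window t (f k + 1)) j
      = (\<Sum>k\<in>{k. k < s \<and> f k + 1 \<le> j \<and> j \<le> f k + t}. 1)"
    unfolding lookup_sum lookup_window by (simp add: sum.If_cases Int_def conj_commute)
  also have "\<dots> = card {k. k < s \<and> f k + 1 \<le> j \<and> j \<le> f k + t}"
    by simp
  also have "\<dots> \<le> card {c j - Poly_Mapping.lookup m j..<c j}"
  proof (intro card_mono subsetI)
    fix k assume "k \<in> {k. k < s \<and> f k + 1 \<le> j \<and> j \<le> f k + t}"
    then have "c j - Poly_Mapping.lookup m j < k + 1 \<and> k + 1 \<le> c j"
      using assms by blast
    then show "k \<in> {c j - Poly_Mapping.lookup m j..<c j}" by auto
  qed simp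
  also have "\<dots> \<le> Poly_Mapping.lookup m j"
    by simp
  finally show "Poly_Mapping.lookup (\<Sum>k<s. window t (f k + 1)) j \<le> Poly_Mapping.lookup m j" .
qed

lemma mdvd_path_power_of_deg_on:
  assumes t: "1 \<le> t" "t \<le> n" and deg: "\<forall>F\<in>C_set n t. s \<le> deg_on F m"
  shows "\<exists>e\<in>exps_power (path_exps n t) s. mdvd e m"
proof -
  define a where "a = Poly_Mapping.lookup m"
  define D where "D = Min (chain_weight a t ` {n + 1 - t..n})"
  obtain G where G: "G \<subseteq> {1..n}" "covers n t G" "sum a G = D"
    using cover_of_chain_weight[OF t, of a] unfolding D_def by blast
  obtain H where H: "H \<subseteq> G" "minimal_cover n t H"
    using exists_minimal_subcover[OF G(1,2)] by blast
  have "s \<le> deg_on H m"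
    using deg H(2) C_set_iff_minimal_cover[OF t(1)] by blast
  also have "\<dots> \<le> sum a G"
    unfolding deg_on_def a_def using H(1) finite_subset[OF G(1)] by (simp add: sum_mono2)
  finally have "s \<le> D" using G(3) by simp
  then have "\<forall>k<s. \<exists>q. q + t \<le> n \<and> (\<forall>j. q + 1 \<le> j \<and> j \<le> q + t \<longrightarrow>
      chain_weight a t j - a j < k + 1 \<and> k + 1 \<le> chain_weight a t j)"
    using chain_weight_layer[OF t] unfolding D_def by simp
  then obtain f where f: "\<And>k. k < s \<Longrightarrow> f k + t \<le> n \<and> (\<forall>j. f k + 1 \<le> j \<and> j \<le> f k + t \<longrightarrow>
      chain_weight a t j - a j < k + 1 \<and> k + 1 \<le> chain_weight a t j)"
    by metis
  have "(\<Sum>k<s. window t (f k + 1)) \<in> exps_power (path_exps n t) s"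
    using f by (intro sum_windows_mem_exps_power) fastforce
  moreover have "mdvd (\<Sum>k<s. window t (f k + 1)) m"
    using f unfolding a_def by (intro mdvd_sum_windows_of_layers) blast
  ultimately show ?thesis by blast
qed

lemma mdvd_path_power_iff:
  assumes "1 \<le> t" and "t \<le> n"
  shows "(\<exists>e\<in>exps_power (path_exps n t) s. mdvd e m) \<longleftrightarrow> (\<forall>F\<in>C_set n t. s \<le> deg_on F m)"
proof
  assume "\<exists>e\<in>exps_power (path_exps n t) s. mdvd e m"
  then obtain e where e: "e \<in> exps_power (path_exps n t) s" "mdvd e m" by blast
  show "\<forall>F\<in>C_set n t. s \<le> deg_on F m"
  proof
    fix F assume "F \<in> C_set n t"
    then have "s \<le> deg_on F e"
      using e(1) C_set_covers C_set_finite by (blast intro: exps_power_deg_on)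
    also have "\<dots> \<le> deg_on F m" using e(2) by (rule mdvd_deg_on_le)
    finally show "s \<le> deg_on F m" .
  qed
qed (use mdvd_path_power_of_deg_on[OF assms] in blast)

theorem ideal_pow_path_ideal_eq:
  assumes "1 \<le> t" and "t \<le> n"
  shows "ideal_pow n (path_ideal n t) s = {p \<in> polyS n. \<forall>F\<in>C_set n t. p \<in> deg_on_ideal n F s}"
proof -
  have "ideal_pow n (path_ideal n t) s = monomial_ideal n (exps_power (path_exps n t) s)"
    unfolding path_ideal_eq_monomial_ideal[OF assms]
    by (rule ideal_pow_monomial_ideal[OF exps_in_path_exps[OF assms]])
  also have "\<dots> = {p \<in> polyS n. \<forall>F\<in>C_set n t. p \<in> deg_on_ideal n F s}"
    unfolding monomial_ideal_def deg_on_ideal_def mdvd_path_power_iff[OF assms] by blast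
  finally show ?thesis .
qed

section \<open>Associated primes\<close>

lemma prod_var_power_mem_deg_on_ideal:
  assumes "finite \<G>" and x: "\<And>G. G \<in> \<G> \<Longrightarrow> x G \<in> G \<and> x G \<in> {1..n}"
    and "F \<in> \<G>" and "finite F"
  shows "(\<Prod>G\<in>\<G>. var (x G) ^ s) \<in> deg_on_ideal n F s"
proof -
  have "var (x F) ^ s \<in> deg_on_ideal n F s"
    using assms(4) x[OF assms(3)] by (intro var_power_mem_deg_on_ideal) auto
  moreover have "(\<Prod>G\<in>\<G> - {F}. var (x G) ^ s) \<in> polyS n"
    using x by (intro polyS_prod polyS_power var_in_polyS) blast
  ultimately have "var (x F) ^ s * (\<Prod>G\<in>\<G> - {F}. var (x G) ^ s) \<in> deg_on_ideal n F s"
    by (rule ideal_mult_right[OF is_ideal_deg_on_ideal])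
  then show ?thesis
    by (simp only: prod.remove[OF assms(1,3)])
qed

text \<open>If not, pick a variable outside \<open>P\<close> in each such \<open>F\<close>: the product of their \<open>s\<close>-th
  powers multiplies \<open>f\<close> into every \<open>\<mathfrak>p\<^sub>F\<^sup>s\<close>, so it lies in \<open>P\<close>, and so does one of the variables.\<close>

lemma prime_over_colon_contains_vars:
  fixes f :: "'a::field mpoly"
  assumes fin: "finite \<F>" and sub: "\<And>F. F \<in> \<F> \<Longrightarrow> F \<subseteq> {1..n}"
    and P: "prime_ideal n P" and f: "f \<in> polyS n"
    and colon: "\<And>h. h \<in> polyS n \<Longrightarrow> (\<forall>F\<in>\<F>. h * f \<in> deg_on_ideal n F s) \<Longrightarrow> h \<in> P"
  shows "\<exists>F\<in>\<F>. f \<notin> deg_on_ideal n F s \<and> var ` F \<subseteq> P"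
proof (rule ccontr)
  define \<G> where "\<G> = {F \<in> \<F>. f \<notin> deg_on_ideal n F s}"
  assume "\<not> (\<exists>F\<in>\<F>. f \<notin> deg_on_ideal n F s \<and> var ` F \<subseteq> P)"
  then have "\<forall>F\<in>\<G>. \<exists>i. i \<in> F \<and> var i \<notin> P"
    unfolding \<G>_def by blast
  from bchoice[OF this] obtain x where x: "\<And>F. F \<in> \<G> \<Longrightarrow> x F \<in> F \<and> var (x F) \<notin> P"
    by blast
  have fin\<G>: "finite \<G>" using fin unfolding \<G>_def by simp
  have x_var: "x F \<in> F \<and> x F \<in> {1..n}" if "F \<in> \<G>" for F
    using x[OF that] sub[of F] that unfolding \<G>_def by auto
  have powS: "var (x F) ^ s \<in> polyS n" if "F \<in> \<G>" for F
    using x_var[OF that] by (intro polyS_power var_in_polyS) blast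
  define h :: "'a mpoly" where "h = (\<Prod>F\<in>\<G>. var (x F) ^ s)"
  have h: "h \<in> polyS n" unfolding h_def using powS by (rule polyS_prod)
  have "h * f \<in> deg_on_ideal n F s" if F: "F \<in> \<F>" for F
  proof (cases "F \<in> \<G>")
    case True
    have "h \<in> deg_on_ideal n F s"
      unfolding h_def using fin\<G> x_var True finite_subset[OF sub[OF F] finite_atLeastAtMost]
      by (rule prod_var_power_mem_deg_on_ideal)
    then show ?thesis using f by (rule ideal_mult_right[OF is_ideal_deg_on_ideal])
  next
    case False
    then have "f \<in> deg_on_ideal n F s" using F unfolding \<G>_def by blast
    then show ?thesis using h by (rule ideal_mult_left[OF is_ideal_deg_on_ideal])
  qed
  then have "h \<in> P"
    using colon[OF h] by blast
  then obtain F where F: "F \<in> \<G>" "var (x F) ^ s \<in> P"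
    using prime_ideal_prod_mem[OF P, of \<G> "\<lambda>F. var (x F) ^ s"] powS fin\<G> unfolding h_def by blast
  then have "var (x F) \<in> P"
    using prime_ideal_power_mem[OF P var_in_polyS] x_var[OF F(1)] by blast
  then show False
    using x[OF F(1)] by blast
qed

lemma Ass_Inter_subset:
  fixes \<F> :: "nat set set" and n s :: nat
  assumes fin: "finite \<F>" and sub: "\<And>F. F \<in> \<F> \<Longrightarrow> F \<subseteq> {1..n}"
  defines "I \<equiv> {p \<in> polyS n. \<forall>F\<in>\<F>. p \<in> deg_on_ideal n F s}"
  shows "Ass n (I :: 'a::field mpoly set) \<subseteq> prime_of n ` \<F>"
proof
  fix P assume "P \<in> Ass n I"
  then obtain f where P: "prime_ideal n P" and f: "f \<in> polyS n" and P_eq: "P = {g \<in> polyS n. g * f \<in> I}"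
    unfolding Ass_def by blast
  have "h \<in> P" if "h \<in> polyS n" "\<forall>F\<in>\<F>. h * f \<in> deg_on_ideal n F s" for h
    unfolding P_eq I_def using that polyS_mult[OF that(1) f] by simp
  then have "\<exists>F\<in>\<F>. f \<notin> deg_on_ideal n F s \<and> var ` F \<subseteq> P"
    using fin sub P f by (intro prime_over_colon_contains_vars)
  then obtain F where F: "F \<in> \<F>" "f \<notin> deg_on_ideal n F s" "var ` F \<subseteq> P"
    by blast
  have "is_ideal n P"
    using P by (simp add: prime_ideal_def)
  then have "prime_of n F \<subseteq> P"
    unfolding prime_of_def using F(3) by (rule gen_ideal_least)
  moreover have "P \<subseteq> prime_of n F"
  proof
    fix g assume "g \<in> P"
    then have g: "g \<in> polyS n" "g * f \<in> deg_on_ideal n F s"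
      using F(1) unfolding P_eq I_def by auto
    then have "g \<in> deg_on_ideal n F 1"
      using deg_on_ideal_primary[OF g(1) f g(2)] F(2) by blast
    then show "g \<in> prime_of n F"
      unfolding prime_of_eq_deg_on_ideal[OF sub[OF F(1)]] .
  qed
  ultimately show "P \<in> prime_of n ` \<F>"
    using F(1) by blast
qed

lemma lookup_mult_monomial:
  "Poly_Mapping.lookup (g * Poly_Mapping.single e 1) (m + e) = Poly_Mapping.lookup (g :: 'a::field mpoly) m"
proof -
  have eq: "g * Poly_Mapping.single e 1
      = (\<Sum>x\<in>Poly_Mapping.keys g. Poly_Mapping.single (x + e) (Poly_Mapping.lookup g x))"
    by (subst sum_single_lookup[of g, symmetric]) (simp add: sum_distrib_right mult_single)
  have "Poly_Mapping.lookup (g * Poly_Mapping.single e 1) (m + e)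
      = (\<Sum>x\<in>Poly_Mapping.keys g. if x = m then Poly_Mapping.lookup g x else 0)"
    unfolding eq lookup_sum by (intro sum.cong) (auto simp: lookup_single)
  also have "\<dots> = Poly_Mapping.lookup g m"
    by (auto simp: in_keys_iff)
  finally show ?thesis .
qed

lemma keys_mult_monomial:
  "Poly_Mapping.keys (g * Poly_Mapping.single e 1) = (\<lambda>m. m + e) ` Poly_Mapping.keys (g :: 'a::field mpoly)"
proof
  show "Poly_Mapping.keys (g * Poly_Mapping.single e 1) \<subseteq> (\<lambda>m. m + e) ` Poly_Mapping.keys g"
    using keys_mult[of g "Poly_Mapping.single e 1"] by auto
  show "(\<lambda>m. m + e) ` Poly_Mapping.keys g \<subseteq> Poly_Mapping.keys (g * Poly_Mapping.single e 1)"
    using lookup_mult_monomial[of g e] by (auto simp: in_keys_iff)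
qed

lemma mult_monomial_mem_monomial_ideal_iff:
  assumes "Poly_Mapping.keys e \<subseteq> {1..n}" and "g \<in> polyS n"
  shows "g * Poly_Mapping.single e 1 \<in> monomial_ideal n E \<longleftrightarrow>
    (\<forall>m\<in>Poly_Mapping.keys g. \<exists>q\<in>E. mdvd q (m + e))"
  using polyS_mult[OF assms(2) polyS_single[OF assms(1)]]
  by (simp add: monomial_ideal_def keys_mult_monomial)

text \<open>The exponent of \<open>x\<^sub>i\<^sup>s\<^sup>-\<^sup>1 \<Prod>\<^bsub>j\<notin>F\<^esub> x\<^sub>j\<^sup>s\<close>, whose colon ideal in \<open>I\<^sup>s\<close> is \<open>\<mathfrak>p\<^sub>F\<close> for any \<open>i \<in> F\<close>.\<close>

definition witness_exp :: "nat \<Rightarrow> nat set \<Rightarrow> nat \<Rightarrow> nat \<Rightarrow> nat \<Rightarrow>\<^sub>0 nat" where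
  "witness_exp n F i s = (\<Sum>j\<in>{1..n} - F. Poly_Mapping.single j s) + Poly_Mapping.single i (s - 1)"

lemma lookup_witness_exp:
  "Poly_Mapping.lookup (witness_exp n F x s) j =
    (if j \<in> {1..n} - F then s else 0) + (if j = x then s - 1 else 0)"
proof -
  have "Poly_Mapping.lookup (\<Sum>j\<in>{1..n} - F. Poly_Mapping.single j s) j
      = (\<Sum>k\<in>{1..n} - F. if k = j then s else 0)"
    unfolding lookup_sum by (intro sum.cong) (auto simp: lookup_single)
  then show ?thesis
    unfolding witness_exp_def lookup_add by (simp add: lookup_single)
qed

lemma keys_witness_exp: "x \<in> {1..n} \<Longrightarrow> Poly_Mapping.keys (witness_exp n F x s) \<subseteq> {1..n}"
  by (auto simp: in_keys_iff lookup_witness_exp split: if_splits)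

lemma deg_on_witness_exp: "finite F \<Longrightarrow> x \<in> F \<Longrightarrow> deg_on F (witness_exp n F x s) = s - 1"
  by (simp add: deg_on_def lookup_witness_exp)

lemma lookup_window_private:
  assumes "private_window n t F x w" and "y \<in> F"
  shows "Poly_Mapping.lookup (window t w) y \<le> (if y = x then 1 else 0)"
proof -
  have "\<forall>y\<in>F. w \<le> y \<and> y \<le> w + t - 1 \<longrightarrow> y = x"
    using assms(1) unfolding private_window_def by blast
  then have priv: "w \<le> y \<and> y \<le> w + t - 1 \<longrightarrow> y = x"
    using assms(2) by (rule bspec)
  show ?thesis
  proof (cases "y = x")
    case False
    then have "\<not> (w \<le> y \<and> y \<le> w + t - 1)" using priv by blast
    then show ?thesis using False by (simp add: lookup_window)
  qed (simp add: lookup_window)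
qed

lemma lookup_window_outside:
  assumes "private_window n t F x w" and "t \<le> n" and "j \<notin> {1..n}"
  shows "Poly_Mapping.lookup (window t w) j = 0"
proof -
  have "1 \<le> w" "w \<le> n - t + 1"
    using assms(1) unfolding private_window_def by simp_all
  then show ?thesis
    using assms(2,3) by (auto simp: lookup_window)
qed

lemma lookup_windows_le_witness_exp:
  assumes w0: "private_window n t F x w0" and wi: "private_window n t F i wi"
    and t: "t \<le> n" and s: "1 \<le> s" and i: "Poly_Mapping.lookup m i \<noteq> 0"
  shows "(s - 1) * Poly_Mapping.lookup (window t w0) j + Poly_Mapping.lookup (window t wi) j
    \<le> Poly_Mapping.lookup m j + Poly_Mapping.lookup (witness_exp n F x s) j"
proof (cases "j \<in> F")
  case True
  have "(s - 1) * Poly_Mapping.lookup (window t w0) j \<le> (s - 1) * (if j = x then 1 else 0)"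
    using lookup_window_private[OF w0 True] by (rule mult_le_mono2)
  moreover have "Poly_Mapping.lookup (window t wi) j \<le> Poly_Mapping.lookup m j"
    using lookup_window_private[OF wi True] i by (cases "j = i") auto
  ultimately have "(s - 1) * Poly_Mapping.lookup (window t w0) j + Poly_Mapping.lookup (window t wi) j
      \<le> (s - 1) * (if j = x then 1 else 0) + Poly_Mapping.lookup m j"
    by (rule add_mono)
  also have "\<dots> = Poly_Mapping.lookup m j + Poly_Mapping.lookup (witness_exp n F x s) j"
    using True by (simp add: lookup_witness_exp)
  finally show ?thesis .
next
  case False
  show ?thesis
  proof (cases "j \<in> {1..n}")
    case True
    have "(s - 1) * Poly_Mapping.lookup (window t w0) j \<le> (s - 1) * 1"
      by (rule mult_le_mono2) (simp add: lookup_window)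
    moreover have "Poly_Mapping.lookup (window t wi) j \<le> 1"
      by (simp add: lookup_window)
    moreover have "s \<le> Poly_Mapping.lookup (witness_exp n F x s) j"
      using True False by (simp add: lookup_witness_exp)
    ultimately show ?thesis using s by linarith
  qed (simp add: lookup_window_outside[OF w0 t] lookup_window_outside[OF wi t])
qed

text \<open>Take \<open>s - 1\<close> copies of a private window of \<open>x\<close> and one of some \<open>i \<in> F\<close> with
  \<open>m\<^sub>i > 0\<close>: inside \<open>F\<close> they only use the exponent \<open>s - 1\<close> at \<open>x\<close> and \<open>1\<close> at \<open>i\<close>.\<close>

lemma mdvd_path_power_witness:
  assumes M: "minimal_cover n t F" and t: "t \<le> n" and s: "1 \<le> s" and x: "x \<in> F"
    and i: "i \<in> F" "Poly_Mapping.lookup m i \<noteq> 0"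
  shows "\<exists>q\<in>exps_power (path_exps n t) s. mdvd q (m + witness_exp n F x s)"
proof -
  obtain w0 wi where w0: "private_window n t F x w0" and wi: "private_window n t F i wi"
    using M x i(1) unfolding minimal_cover_def by blast
  define g where "g k = (if k < s - 1 then w0 else wi)" for k
  define q where "q = (\<Sum>k<s. window t (g k))"
  have "q \<in> exps_power (path_exps n t) s"
    unfolding q_def using w0 wi by (intro sum_windows_mem_exps_power) (auto simp: g_def private_window_def)
  moreover have "mdvd q (m + witness_exp n F x s)"
    unfolding mdvd_def
  proof
    fix j
    have "{..<s} = insert (s - 1) {..<s - 1}" using s by auto
    then have "Poly_Mapping.lookup q j
        = (s - 1) * Poly_Mapping.lookup (window t w0) j + Poly_Mapping.lookup (window t wi) j"
      unfolding q_def lookup_sum by (simp add: g_def)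
    then show "Poly_Mapping.lookup q j \<le> Poly_Mapping.lookup (m + witness_exp n F x s) j"
      using lookup_windows_le_witness_exp[OF w0 wi t s i(2)] by (simp add: lookup_add)
  qed
  ultimately show ?thesis by blast
qed

lemma mdvd_path_power_witness_iff:
  assumes M: "minimal_cover n t F" and t: "t \<le> n" and s: "1 \<le> s" and x: "x \<in> F"
  shows "(\<exists>q\<in>exps_power (path_exps n t) s. mdvd q (m + witness_exp n F x s)) \<longleftrightarrow> 1 \<le> deg_on F m"
proof
  have fin: "finite F" using minimal_cover_finite[OF M] .
  assume "\<exists>q\<in>exps_power (path_exps n t) s. mdvd q (m + witness_exp n F x s)"
  then obtain q where "q \<in> exps_power (path_exps n t) s" "mdvd q (m + witness_exp n F x s)"
    by blast
  then have "s \<le> deg_on F (m + witness_exp n F x s)"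
    using M fin exps_power_deg_on mdvd_deg_on_le le_trans unfolding minimal_cover_def by blast
  then show "1 \<le> deg_on F m"
    using s by (simp add: deg_on_add deg_on_witness_exp[OF fin x])
next
  assume "1 \<le> deg_on F m"
  then obtain i where "i \<in> F" "Poly_Mapping.lookup m i \<noteq> 0"
    unfolding deg_on_def by (metis not_one_le_zero sum.neutral)
  then show "\<exists>q\<in>exps_power (path_exps n t) s. mdvd q (m + witness_exp n F x s)"
    by (rule mdvd_path_power_witness[OF M t s x])
qed

lemma prime_of_mem_Ass:
  assumes t: "1 \<le> t" "t \<le> n" and s: "1 \<le> s" and F: "F \<in> C_set n t"
  shows "prime_of n F \<in> Ass n (ideal_pow n (path_ideal n t) s)"
proof -
  have M: "minimal_cover n t F" using C_set_minimal_cover[OF F t(1)] .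
  obtain x where x: "x \<in> F" using C_set_nonempty[OF F] by blast
  define f :: "'a::field mpoly" where "f = Poly_Mapping.single (witness_exp n F x s) 1"
  have e: "Poly_Mapping.keys (witness_exp n F x s) \<subseteq> {1..n}"
    using x C_set_subset[OF F] by (intro keys_witness_exp) auto
  have "g \<in> deg_on_ideal n F 1 \<longleftrightarrow> g * f \<in> ideal_pow n (path_ideal n t) s" if "g \<in> polyS n" for g
    unfolding f_def path_ideal_eq_monomial_ideal[OF t] ideal_pow_monomial_ideal[OF exps_in_path_exps[OF t]]
      mult_monomial_mem_monomial_ideal_iff[OF e that] mdvd_path_power_witness_iff[OF M t(2) s x]
    using that by (simp add: deg_on_ideal_def)
  then have "prime_of n F = {g \<in> polyS n. g * f \<in> ideal_pow n (path_ideal n t) s}"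
    unfolding prime_of_eq_deg_on_ideal[OF C_set_subset[OF F]] by (auto simp: deg_on_ideal_def)
  moreover have "f \<in> polyS n"
    unfolding f_def using e by (rule polyS_single)
  moreover have "prime_ideal n (prime_of n F :: 'a mpoly set)"
    unfolding prime_of_eq_deg_on_ideal[OF C_set_subset[OF F]] by (rule prime_ideal_deg_on_ideal_1)
  ultimately show ?thesis
    unfolding Ass_def by blast
qed

theorem corollary2p8:
  fixes n t s :: nat
  assumes "2 \<le> t" and "t \<le> n" and "1 \<le> s"
  shows "Ass n (ideal_pow n (path_ideal n t :: 'a::field mpoly set) s)
           = prime_of n ` C_set n t"
proof
  have t: "1 \<le> t" "t \<le> n" using assms by auto
  have "C_set n t \<subseteq> Pow {1..n}"
    using C_set_subset by blast
  then have "finite (C_set n t)"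
    by (rule finite_subset) simp
  then show "Ass n (ideal_pow n (path_ideal n t :: 'a mpoly set) s) \<subseteq> prime_of n ` C_set n t"
    unfolding ideal_pow_path_ideal_eq[OF t] by (rule Ass_Inter_subset) (rule C_set_subset)
  show "prime_of n ` C_set n t \<subseteq> Ass n (ideal_pow n (path_ideal n t :: 'a mpoly set) s)"
    using prime_of_mem_Ass[OF t assms(3)] by blast
qed

end
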